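(* Let $G'(L'\cup R',E')$ be a bipartite graph with $|L'|=|R'|=N$ in which every vertex has degree at least $2N/3$. Then for any edge $e\in E'$, the probability that $e$ belongs to a perfect matching of $G'$ chosen uniformly at random is at most $3/N$. *)

theory Defs
  imports Complex_Main
begin

text \<open>A bipartite graph with left part L, right part R (disjoint, since of different types)
  and edge set E, a subset of L \<times> R.\<close>

definition bipartite_graph :: "'a set \<Rightarrow> 'b set \<Rightarrow> ('a \<times> 'b) set \<Rightarrow> bool" where
  "bipartite_graph L R E \<longleftrightarrow> finite L \<and> finite R \<and> E \<subseteq> L \<times> R"

definition deg_left :: "('a \<times> 'b) set \<Rightarrow> 'a \<Rightarrow> nat" where
  "deg_left E l = card {r. (l, r) \<in> E}"

definition deg_right :: "('a \<times> 'b) set \<Rightarrow> 'b \<Rightarrow> nat" where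
  "deg_right E r = card {l. (l, r) \<in> E}"

definition perfect_matchings :: "'a set \<Rightarrow> 'b set \<Rightarrow> ('a \<times> 'b) set \<Rightarrow> ('a \<times> 'b) set set" where
  "perfect_matchings L R E =
     {M. M \<subseteq> E \<and> (\<forall>l\<in>L. \<exists>!r. (l, r) \<in> M) \<and> (\<forall>r\<in>R. \<exists>!l. (l, r) \<in> M)}"

definition prob_edge_in_random_pm :: "'a set \<Rightarrow> 'b set \<Rightarrow> ('a \<times> 'b) set \<Rightarrow> ('a \<times> 'b) \<Rightarrow> real" where
  "prob_edge_in_random_pm L R E e =
     real (card {M \<in> perfect_matchings L R E. e \<in> M}) / real (card (perfect_matchings L R E))"

end

(*
  Fix the edge e = (u, v) and let A and B be the perfect matchings containing and avoiding e.
  Given M in A, call (a, b) in M switchable if a is not u and (u, b), (a, v) are edges;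
  exchanging the partners of u and a turns M into a matching in B, and (M, (a, b)) can be
  read off from the result.  The matching edges whose left end is a neighbour of v and those
  whose right end is a neighbour of u number deg v and deg u, so at least
  deg u + deg v - N - 1 >= N/3 - 1 edges of M are switchable.  Hence
  |A| (N/3 - 1) <= |B|, i.e. |A| N/3 <= |A| + |B|.
*)

theory Submission
  imports Defs
begin

lemma perfect_matching_subset:
  assumes "bipartite_graph L R E" "M \<in> perfect_matchings L R E"
  shows "M \<subseteq> L \<times> R"
  using assms unfolding bipartite_graph_def perfect_matchings_def by blast

lemma perfect_matching_same_fst:
  assumes "bipartite_graph L R E" "M \<in> perfect_matchings L R E" "(a, b) \<in> M" "(a, b') \<in> M"
  shows "b = b'"
  using assms perfect_matching_subset[OF assms(1,2)] unfolding perfect_matchings_def by blast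

lemma perfect_matching_same_snd:
  assumes "bipartite_graph L R E" "M \<in> perfect_matchings L R E" "(a, b) \<in> M" "(a', b) \<in> M"
  shows "a = a'"
  using assms perfect_matching_subset[OF assms(1,2)] unfolding perfect_matchings_def by blast

lemma bij_betw_fst_perfect_matching:
  assumes "bipartite_graph L R E" "M \<in> perfect_matchings L R E"
  shows "bij_betw fst M L"
proof -
  have "inj_on fst M"
    using perfect_matching_same_fst[OF assms] by (auto simp: inj_on_def)
  moreover have "fst ` M = L"
    using assms perfect_matching_subset[OF assms] unfolding perfect_matchings_def by force
  ultimately show ?thesis by (simp add: bij_betw_def)
qed

lemma bij_betw_snd_perfect_matching:
  assumes "bipartite_graph L R E" "M \<in> perfect_matchings L R E"
  shows "bij_betw snd M R"
proof -
  have "inj_on snd M"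
    using perfect_matching_same_snd[OF assms] by (auto simp: inj_on_def)
  moreover have "snd ` M = R"
    using assms perfect_matching_subset[OF assms] unfolding perfect_matchings_def by force
  ultimately show ?thesis by (simp add: bij_betw_def)
qed

lemma card_perfect_matching_filter_fst:
  assumes "bipartite_graph L R E" "M \<in> perfect_matchings L R E"
  shows "card {p \<in> M. P (fst p)} = card {a \<in> L. P a}"
proof -
  have bij: "bij_betw fst M L" using bij_betw_fst_perfect_matching[OF assms] .
  then have "bij_betw fst {p \<in> M. P (fst p)} (fst ` {p \<in> M. P (fst p)})"
    by (rule bij_betw_subset) auto
  moreover have "fst ` {p \<in> M. P (fst p)} = {a \<in> L. P a}"
    using bij by (auto simp: bij_betw_def)
  ultimately show ?thesis by (simp add: bij_betw_same_card)
qed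

lemma card_perfect_matching_filter_snd:
  assumes "bipartite_graph L R E" "M \<in> perfect_matchings L R E"
  shows "card {p \<in> M. P (snd p)} = card {b \<in> R. P b}"
proof -
  have bij: "bij_betw snd M R" using bij_betw_snd_perfect_matching[OF assms] .
  then have "bij_betw snd {p \<in> M. P (snd p)} (snd ` {p \<in> M. P (snd p)})"
    by (rule bij_betw_subset) auto
  moreover have "snd ` {p \<in> M. P (snd p)} = {b \<in> R. P b}"
    using bij by (auto simp: bij_betw_def)
  ultimately show ?thesis by (simp add: bij_betw_same_card)
qed

definition swap_partners :: "('a \<times> 'b) set \<Rightarrow> 'a \<Rightarrow> 'b \<Rightarrow> 'a \<Rightarrow> 'b \<Rightarrow> ('a \<times> 'b) set" where
  "swap_partners M u v a b = M - {(u, v), (a, b)} \<union> {(u, b), (a, v)}"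

definition switchable_edges :: "('a \<times> 'b) set \<Rightarrow> ('a \<times> 'b) set \<Rightarrow> 'a \<Rightarrow> 'b \<Rightarrow> ('a \<times> 'b) set" where
  "switchable_edges E M u v = {(a, b) \<in> M. a \<noteq> u \<and> (u, b) \<in> E \<and> (a, v) \<in> E}"

lemma switchable_edges_subset: "switchable_edges E M u v \<subseteq> M"
  by (auto simp: switchable_edges_def)

lemma switchable_edges_ne:
  assumes G: "bipartite_graph L R E" and M: "M \<in> perfect_matchings L R E"
    and uv: "(u, v) \<in> M" and ab: "(a, b) \<in> switchable_edges E M u v"
  shows "a \<noteq> u" and "b \<noteq> v"
proof -
  show "a \<noteq> u" using ab by (simp add: switchable_edges_def)
  then show "b \<noteq> v"
    using perfect_matching_same_snd[OF G M uv] ab by (auto simp: switchable_edges_def)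
qed

lemma swap_partners_unique_left:
  assumes G: "bipartite_graph L R E" and M: "M \<in> perfect_matchings L R E"
    and uv: "(u, v) \<in> M" and ab: "(a, b) \<in> M" and "a \<noteq> u" "b \<noteq> v" and "l \<in> L"
  shows "\<exists>!r. (l, r) \<in> swap_partners M u v a b"
proof -
  note same_fst = perfect_matching_same_fst[OF G M]
  obtain r where "(l, r) \<in> M" using M \<open>l \<in> L\<close> by (auto simp: perfect_matchings_def)
  consider "l = u" | "l = a" | "l \<noteq> u" "l \<noteq> a" by blast
  then show ?thesis
  proof cases
    case 1
    then show ?thesis
      using \<open>a \<noteq> u\<close> \<open>b \<noteq> v\<close> uv
      by (intro ex1I[of _ b]) (auto simp: swap_partners_def dest: same_fst)
  next
    case 2
    then show ?thesis
      using \<open>a \<noteq> u\<close> \<open>b \<noteq> v\<close> ab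
      by (intro ex1I[of _ v]) (auto simp: swap_partners_def dest: same_fst)
  next
    case 3
    then show ?thesis
      using \<open>(l, r) \<in> M\<close>
      by (intro ex1I[of _ r]) (auto simp: swap_partners_def dest: same_fst)
  qed
qed

lemma swap_partners_unique_right:
  assumes G: "bipartite_graph L R E" and M: "M \<in> perfect_matchings L R E"
    and uv: "(u, v) \<in> M" and ab: "(a, b) \<in> M" and "a \<noteq> u" "b \<noteq> v" and "r \<in> R"
  shows "\<exists>!l. (l, r) \<in> swap_partners M u v a b"
proof -
  note same_snd = perfect_matching_same_snd[OF G M]
  obtain l where "(l, r) \<in> M" using M \<open>r \<in> R\<close> by (auto simp: perfect_matchings_def)
  consider "r = v" | "r = b" | "r \<noteq> v" "r \<noteq> b" by blast
  then show ?thesis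
  proof cases
    case 1
    then show ?thesis
      using \<open>a \<noteq> u\<close> \<open>b \<noteq> v\<close> uv
      by (intro ex1I[of _ a]) (auto simp: swap_partners_def dest: same_snd)
  next
    case 2
    then show ?thesis
      using \<open>a \<noteq> u\<close> \<open>b \<noteq> v\<close> ab
      by (intro ex1I[of _ u]) (auto simp: swap_partners_def dest: same_snd)
  next
    case 3
    then show ?thesis
      using \<open>(l, r) \<in> M\<close>
      by (intro ex1I[of _ l]) (auto simp: swap_partners_def dest: same_snd)
  qed
qed

lemma swap_partners_in_perfect_matchings:
  assumes G: "bipartite_graph L R E" and M: "M \<in> perfect_matchings L R E"
    and uv: "(u, v) \<in> M" and ab: "(a, b) \<in> switchable_edges E M u v"
  shows "swap_partners M u v a b \<in> perfect_matchings L R E"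
proof -
  have "(a, b) \<in> M" and "(u, b) \<in> E" and "(a, v) \<in> E"
    using ab by (auto simp: switchable_edges_def)
  moreover have "a \<noteq> u" and "b \<noteq> v" using switchable_edges_ne[OF G M uv ab] .
  moreover have "M \<subseteq> E" using M by (simp add: perfect_matchings_def)
  ultimately show ?thesis
    using swap_partners_unique_left[OF G M uv] swap_partners_unique_right[OF G M uv]
    by (auto simp: perfect_matchings_def swap_partners_def)
qed

lemma swap_partners_involution:
  assumes G: "bipartite_graph L R E" and M: "M \<in> perfect_matchings L R E"
    and uv: "(u, v) \<in> M" and ab: "(a, b) \<in> M" and "a \<noteq> u"
  shows "swap_partners (swap_partners M u v a b) u b a v = M"
proof -
  have "b \<noteq> v" using perfect_matching_same_snd[OF G M uv] ab \<open>a \<noteq> u\<close> by blast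
  then have "(u, b) \<notin> M" and "(a, v) \<notin> M"
    using perfect_matching_same_fst[OF G M uv] perfect_matching_same_snd[OF G M uv] \<open>a \<noteq> u\<close>
    by blast+
  then show ?thesis using uv ab \<open>a \<noteq> u\<close> \<open>b \<noteq> v\<close> by (auto simp: swap_partners_def)
qed

lemma inj_on_swap_partners:
  assumes G: "bipartite_graph L R E"
  shows "inj_on (\<lambda>(M, a, b). swap_partners M u v a b)
           (SIGMA M:{M \<in> perfect_matchings L R E. (u, v) \<in> M}. switchable_edges E M u v)"
proof (rule inj_onI, clarsimp)
  fix M1 a1 b1 M2 a2 b2
  assume M1: "M1 \<in> perfect_matchings L R E" "(u, v) \<in> M1" "(a1, b1) \<in> switchable_edges E M1 u v"
    and M2: "M2 \<in> perfect_matchings L R E" "(u, v) \<in> M2" "(a2, b2) \<in> switchable_edges E M2 u v"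
    and eq: "swap_partners M1 u v a1 b1 = swap_partners M2 u v a2 b2"
  let ?M' = "swap_partners M1 u v a1 b1"
  have M': "?M' \<in> perfect_matchings L R E"
    using swap_partners_in_perfect_matchings[OF G M1] .
  have "(a1, v) \<in> ?M'" "(a2, v) \<in> ?M'" "(u, b1) \<in> ?M'" "(u, b2) \<in> ?M'"
    using eq by (auto simp: swap_partners_def)
  then have "a1 = a2" "b1 = b2"
    using perfect_matching_same_fst[OF G M'] perfect_matching_same_snd[OF G M'] by blast+
  moreover have "M1 = M2"
  proof -
    have "M1 = swap_partners ?M' u b1 a1 v"
      using swap_partners_involution[OF G M1(1,2)] M1(3) by (auto simp: switchable_edges_def)
    also have "\<dots> = M2"
      using swap_partners_involution[OF G M2(1,2)] M2(3) eq \<open>a1 = a2\<close> \<open>b1 = b2\<close>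
      by (auto simp: switchable_edges_def)
    finally show ?thesis .
  qed
  ultimately show "M1 = M2 \<and> a1 = a2 \<and> b1 = b2" by blast
qed

lemma card_switchable_edges:
  assumes G: "bipartite_graph L R E" and M: "M \<in> perfect_matchings L R E" and uv: "(u, v) \<in> M"
  shows "deg_left E u + deg_right E v \<le> card L + 1 + card (switchable_edges E M u v)"
proof -
  have ER: "E \<subseteq> L \<times> R" and "finite L" using G by (auto simp: bipartite_graph_def)
  have bij: "bij_betw fst M L" using bij_betw_fst_perfect_matching[OF G M] .
  then have "finite M" and card_M: "card M = card L"
    using \<open>finite L\<close> by (simp_all add: bij_betw_finite bij_betw_same_card)
  define X where "X = {p \<in> M. (fst p, v) \<in> E}"
  define Y where "Y = {p \<in> M. (u, snd p) \<in> E}"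
  have "{a \<in> L. (a, v) \<in> E} = {a. (a, v) \<in> E}" and "{b \<in> R. (u, b) \<in> E} = {b. (u, b) \<in> E}"
    using ER by blast+
  then have "card X = deg_right E v" and "card Y = deg_left E u"
    using card_perfect_matching_filter_fst[OF G M, of "\<lambda>a. (a, v) \<in> E"]
      card_perfect_matching_filter_snd[OF G M, of "\<lambda>b. (u, b) \<in> E"]
    by (simp_all add: X_def Y_def deg_left_def deg_right_def)
  moreover have "X \<inter> Y = insert (u, v) (switchable_edges E M u v)"
  proof (intro equalityI subsetI)
    fix p assume "p \<in> X \<inter> Y"
    moreover obtain a b where "p = (a, b)" by fastforce
    ultimately show "p \<in> insert (u, v) (switchable_edges E M u v)"
      using perfect_matching_same_fst[OF G M uv] by (auto simp: X_def Y_def switchable_edges_def)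
  next
    have "(u, v) \<in> E" using M uv by (auto simp: perfect_matchings_def)
    fix p assume "p \<in> insert (u, v) (switchable_edges E M u v)"
    then show "p \<in> X \<inter> Y"
      using uv \<open>(u, v) \<in> E\<close> by (auto simp: X_def Y_def switchable_edges_def)
  qed
  moreover have "(u, v) \<notin> switchable_edges E M u v"
    by (simp add: switchable_edges_def)
  moreover have "card (X \<union> Y) \<le> card L"
    using card_M \<open>finite M\<close> by (metis card_mono X_def Y_def Un_least Collect_subset)
  moreover have "card X + card Y = card (X \<union> Y) + card (X \<inter> Y)"
    using \<open>finite M\<close> by (intro card_Un_Int) (auto simp: X_def Y_def)
  moreover have "finite (switchable_edges E M u v)"
    using \<open>finite M\<close> switchable_edges_subset by (rule rev_finite_subset)
  ultimately show ?thesis by simp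
qed

lemma card_perfect_matchings_containing_edge:
  assumes G: "bipartite_graph L R E"
  shows "card {M \<in> perfect_matchings L R E. (u, v) \<in> M} * (deg_left E u + deg_right E v - card L)
           \<le> card (perfect_matchings L R E)"
proof -
  define PM where "PM = perfect_matchings L R E"
  define A where "A = {M \<in> PM. (u, v) \<in> M}"
  define d where "d = deg_left E u + deg_right E v - card L"
  let ?S = "\<lambda>M. switchable_edges E M u v"
  have "finite E" using G finite_cartesian_product finite_subset by (auto simp: bipartite_graph_def)
  moreover have "PM \<subseteq> Pow E" by (auto simp: PM_def perfect_matchings_def)
  ultimately have "finite PM" by (simp add: finite_subset)
  then have "finite A" by (simp add: A_def)
  have "d - 1 \<le> card (?S M)" if "M \<in> A" for M
    using card_switchable_edges[OF G, of M u v] that by (simp add: A_def PM_def d_def)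
  then have "card A * (d - 1) \<le> (\<Sum>M\<in>A. card (?S M))"
    using sum_bounded_below[of A "d - 1" "\<lambda>M. card (?S M)"] by simp
  also have "\<dots> = card (Sigma A ?S)"
  proof (rule card_SigmaI[symmetric, OF \<open>finite A\<close>])
    have "finite (?S M)" if "M \<in> A" for M
    proof -
      have "M \<subseteq> E" using that by (simp add: A_def PM_def perfect_matchings_def)
      then have "finite M" using \<open>finite E\<close> by (rule finite_subset)
      then show ?thesis by (rule finite_subset[OF switchable_edges_subset])
    qed
    then show "\<forall>M\<in>A. finite (?S M)" by blast
  qed
  also have "\<dots> \<le> card (PM - A)"
  proof (rule card_inj_on_le)
    show "inj_on (\<lambda>(M, a, b). swap_partners M u v a b) (Sigma A ?S)"
      using inj_on_swap_partners[OF G] by (simp add: A_def PM_def)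
    have "swap_partners M u v a b \<in> PM - A" if "M \<in> A" and "(a, b) \<in> ?S M" for M a b
    proof -
      have "M \<in> PM" and "(u, v) \<in> M" using \<open>M \<in> A\<close> by (simp_all add: A_def)
      then have "swap_partners M u v a b \<in> PM"
        using swap_partners_in_perfect_matchings[OF G _ _ \<open>(a, b) \<in> ?S M\<close>] by (simp add: PM_def)
      moreover have "(u, v) \<notin> swap_partners M u v a b"
        using switchable_edges_ne[OF G _ _ \<open>(a, b) \<in> ?S M\<close>] \<open>M \<in> PM\<close> \<open>(u, v) \<in> M\<close>
        by (simp add: PM_def swap_partners_def)
      ultimately show ?thesis by (simp add: A_def)
    qed
    then show "(\<lambda>(M, a, b). swap_partners M u v a b) ` Sigma A ?S \<subseteq> PM - A"
      by auto
    show "finite (PM - A)" using \<open>finite PM\<close> by simp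
  qed
  also have "\<dots> = card PM - card A"
    using \<open>finite A\<close> by (rule card_Diff_subset) (auto simp: A_def)
  finally have "card A * (d - 1) + card A \<le> card PM"
    using card_mono[OF \<open>finite PM\<close>, of A] by (simp add: A_def)
  moreover have "card A * d \<le> card A * (d - 1) + card A"
    by (cases d) simp_all
  ultimately show ?thesis by (simp add: A_def PM_def d_def)
qed

theorem mainTheorem13:
  fixes L :: "'a set" and R :: "'b set" and E :: "('a \<times> 'b) set" and N :: nat
    and e :: "'a \<times> 'b"
  assumes "bipartite_graph L R E"
    and "card L = N" and "card R = N"
    and "\<forall>l\<in>L. real (deg_left E l) \<ge> 2 * real N / 3"
    and "\<forall>r\<in>R. real (deg_right E r) \<ge> 2 * real N / 3"
    and "e \<in> E"
  shows "prob_edge_in_random_pm L R E e \<le> 3 / real N"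
proof -
  obtain u v where e: "e = (u, v)" by fastforce
  have "u \<in> L" "v \<in> R" and "finite L"
    using assms(1,6) e by (auto simp: bipartite_graph_def)
  then have "N > 0" using assms(2) card_gt_0_iff by blast
  let ?A = "card {M \<in> perfect_matchings L R E. e \<in> M}"
  let ?PM = "card (perfect_matchings L R E)"
  have "N \<le> 3 * (deg_left E u + deg_right E v - N)"
    using assms(4,5) \<open>u \<in> L\<close> \<open>v \<in> R\<close> by fastforce
  then have "?A * N \<le> ?A * (3 * (deg_left E u + deg_right E v - N))"
    by (rule mult_le_mono2)
  also have "\<dots> = 3 * (?A * (deg_left E u + deg_right E v - N))"
    by simp
  also have "\<dots> \<le> 3 * ?PM"
    using card_perfect_matchings_containing_edge[OF assms(1), of u v] assms(2) e by simp
  finally have "real (?A * N) \<le> real (3 * ?PM)"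
    by (simp only: of_nat_le_iff)
  \<comment> \<open>Without perfect matchings the probability is 0 by the convention x / 0 = 0.\<close>
  then show ?thesis
    using \<open>N > 0\<close>
    by (cases "?PM = 0") (simp_all add: prob_edge_in_random_pm_def divide_simps mult.commute)
qed

end
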